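(* Let $G=([n],E)$ be any graph, $F$ the uniform distribution on $[0,1]$, and $p\in(0,1)$. Let $X\subseteq[0,1]^n$ be the set of vectors $\mathbf{x}$ such that for every $i$: $\sum_{j\in N(i)\cup\{i\}}x_j\ge1$, and $\sum_{j\in N(i)\cup\{i\}}x_j>1$ implies $x_i=0$. Then $$p(1-p)\min_{\mathbf{x}\in X}\sum_i x_i\ \le\ \inf_{\mathbf{T}\in\mathcal{N}_{p\cdot\mathbf{1}}}\mathcal{R}(p\cdot\mathbf{1},\mathbf{T})\ \le\ p\log(1/p)\min_{\mathbf{x}\in X}\sum_ix_i.$$
   Context: Public-goods pricing game: $n$ buyers are the vertices of an undirected graph $G=([n],E)$; $N(i)=\{j:(i,j)\in E\}$ (so $i\notin N(i)$). Values i.i.d. uniform on $[0,1]$, $F(x)=\min\{1,x\}$ for $x\ge0$, $F(\infty)=1$. An equilibrium for price vector $\mathbf{p}$ is $\mathbf{T}\in[0,\infty]^n$ (buyer $i$ purchases iff $v_i\ge T_i$) with $T_i=p_i/\prod_{j\in N(i)}F(T_j)$ for all $i$ (convention $c/0=\infty$); $\mathcal{N}_{\mathbf{p}}$ is the set of equilibria; $\mathcal{R}(\mathbf{p},\mathbf{T})=\sum_ip_i(1-F(T_i))$; $p\cdot\mathbf{1}$ is the uniform price vector; $\log$ is the natural logarithm. *)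

theory Defs
  imports "HOL-Analysis.Analysis"
begin

text \<open>Graph on vertex set [n] = {0..<n}, given by a symmetric irreflexive
  adjacency relation E.\<close>
definition graph_on :: "nat \<Rightarrow> (nat \<Rightarrow> nat \<Rightarrow> bool) \<Rightarrow> bool" where
  "graph_on n E \<longleftrightarrow> (\<forall>i j. E i j \<longrightarrow> E j i) \<and> (\<forall>i. \<not> E i i)"

definition nbrs :: "nat \<Rightarrow> (nat \<Rightarrow> nat \<Rightarrow> bool) \<Rightarrow> nat \<Rightarrow> nat set" where
  "nbrs n E i = {j. j < n \<and> E i j}"

text \<open>Uniform CDF on [0,1], extended to [0,\<infinity>] with F(\<infinity>) = 1.\<close>
definition Funif :: "ennreal \<Rightarrow> real" where
  "Funif t = (if t = top then 1 else min 1 (enn2real t))"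

text \<open>Equilibria for price vector pv: thresholds T in [0,\<infinity>]^n with
  T_i = p_i / prod_{j in N(i)} F(T_j), convention c/0 = \<infinity>.\<close>
definition equilibria :: "nat \<Rightarrow> (nat \<Rightarrow> nat \<Rightarrow> bool) \<Rightarrow> (nat \<Rightarrow> real) \<Rightarrow> (nat \<Rightarrow> ennreal) set" where
  "equilibria n E pv = {T. \<forall>i<n.
      T i = (let q = (\<Prod>j\<in>nbrs n E i. Funif (T j)) in
             if q = 0 then top else ennreal (pv i / q))}"

definition revenue :: "nat \<Rightarrow> (nat \<Rightarrow> real) \<Rightarrow> (nat \<Rightarrow> ennreal) \<Rightarrow> real" where
  "revenue n pv T = (\<Sum>i<n. pv i * (1 - Funif (T i)))"

definition Xset :: "nat \<Rightarrow> (nat \<Rightarrow> nat \<Rightarrow> bool) \<Rightarrow> (nat \<Rightarrow> real) set" where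
  "Xset n E = {x. (\<forall>i<n. 0 \<le> x i \<and> x i \<le> 1) \<and>
      (\<forall>i<n. (\<Sum>j\<in>insert i (nbrs n E i). x j) \<ge> 1 \<and>
             ((\<Sum>j\<in>insert i (nbrs n E i). x j) > 1 \<longrightarrow> x i = 0))}"

end

theory Submission
  imports Defs
begin

text \<open>Put y_i = F(T_i) and x_i = log_p y_i. In these coordinates the equilibrium
  condition y_i = min 1 (p / prod_{j in N(i)} y_j) becomes the fixpoint equation
  x_i = max 0 (1 - sum_{j in N(i)} x_j), which is exactly membership in X, and every
  x in X arises from an equilibrium. The revenue is sum_i p (1 - p^x_i), and for
  0 <= x <= 1 convexity of p^x and e^t >= 1 + t give (1 - p) x <= 1 - p^x <= x log(1/p).
  The indicator vector of a maximal independent set shows that X is nonempty.\<close>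

lemma Funif_nonneg: "0 \<le> Funif t"
  by (simp add: Funif_def)

lemma Funif_le_one: "Funif t \<le> 1"
  by (simp add: Funif_def)

lemma Funif_ennreal: "0 \<le> r \<Longrightarrow> Funif (ennreal r) = min 1 r"
  by (simp add: Funif_def)

lemma min_one_powr:
  fixes p a :: real
  assumes "0 < p" "p < 1"
  shows "min 1 (p powr a) = p powr (max 0 a)"
proof (cases "a \<le> 0")
  case True
  then have "1 \<le> p powr a"
    using assms by (simp add: powr_def mult_nonpos_nonpos)
  then show ?thesis using True assms by simp
next
  case False
  then have "p powr a \<le> 1"
    using assms by (intro powr_le1) auto
  then show ?thesis using False by simp
qed

lemma one_minus_powr_ge:
  fixes p x :: real
  assumes "0 < p" "0 \<le> x" "x \<le> 1"
  shows "(1 - p) * x \<le> 1 - p powr x"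
proof -
  have "exp ((1 - x) *\<^sub>R 0 + x *\<^sub>R ln p) \<le> (1 - x) * exp 0 + x * exp (ln p)"
    using assms by (intro convex_onD[OF exp_convex]) auto
  then show ?thesis
    using assms by (simp add: powr_def algebra_simps)
qed

lemma one_minus_powr_le:
  fixes p x :: real
  assumes "0 < p"
  shows "1 - p powr x \<le> x * ln (1 / p)"
proof -
  have "p powr x = exp (x * ln p)" "x * ln (1 / p) = - (x * ln p)"
    using assms by (simp_all add: powr_def ln_div)
  then show ?thesis
    using exp_ge_add_one_self[of "x * ln p"] by linarith
qed

lemma finite_nbrs: "finite (nbrs n E i)"
  by (rule finite_subset[of _ "{..<n}"]) (auto simp: nbrs_def)

lemma sum_insert_nbrs:
  assumes "graph_on n E"
  shows "(\<Sum>j\<in>insert i (nbrs n E i). x j) = x i + (\<Sum>j\<in>nbrs n E i. x j)"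
proof -
  have "i \<notin> nbrs n E i" using assms by (simp add: nbrs_def graph_on_def)
  then show ?thesis by (simp add: finite_nbrs)
qed

lemma Xset_iff_fixpoint:
  assumes "graph_on n E"
  shows "x \<in> Xset n E \<longleftrightarrow> (\<forall>i<n. x i = max 0 (1 - (\<Sum>j\<in>nbrs n E i. x j)))"
proof
  assume "x \<in> Xset n E"
  then show "\<forall>i<n. x i = max 0 (1 - (\<Sum>j\<in>nbrs n E i. x j))"
    by (auto simp: Xset_def sum_insert_nbrs[OF assms] intro!: antisym)
next
  assume fixpoint: "\<forall>i<n. x i = max 0 (1 - (\<Sum>j\<in>nbrs n E i. x j))"
  have "0 \<le> x i" if "i < n" for i
    using that fixpoint by (metis max.cobounded1)
  then have "0 \<le> (\<Sum>j\<in>nbrs n E i. x j)" for i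
    by (intro sum_nonneg) (simp add: nbrs_def)
  with fixpoint show "x \<in> Xset n E"
    by (auto simp: Xset_def sum_insert_nbrs[OF assms])
qed

lemma equilibrium_Funif_ge:
  assumes "T \<in> equilibria n E (\<lambda>_. p)" "0 < p" "p < 1" "i < n"
  shows "p \<le> Funif (T i)"
proof -
  define q where "q = (\<Prod>j\<in>nbrs n E i. Funif (T j))"
  have "0 \<le> q" "q \<le> 1"
    unfolding q_def by (simp_all add: prod_nonneg prod_le_1 Funif_nonneg Funif_le_one)
  moreover have "T i = (if q = 0 then top else ennreal (p / q))"
    using assms(1,4) by (simp add: equilibria_def q_def Let_def)
  ultimately show ?thesis
    using assms(2,3) by (auto simp: Funif_def Funif_ennreal le_divide_eq)
qed

lemma equilibrium_Funif_eq:
  assumes "T \<in> equilibria n E (\<lambda>_. p)" "0 < p" "p < 1" "i < n"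
  shows "Funif (T i) = min 1 (p / (\<Prod>j\<in>nbrs n E i. Funif (T j)))"
proof -
  define q where "q = (\<Prod>j\<in>nbrs n E i. Funif (T j))"
  have "0 < q"
    unfolding q_def using assms equilibrium_Funif_ge
    by (intro prod_pos) (fastforce simp: nbrs_def)
  moreover have "T i = (if q = 0 then top else ennreal (p / q))"
    using assms(1,4) by (simp add: equilibria_def q_def Let_def)
  ultimately show ?thesis
    using assms(2) by (simp add: Funif_ennreal q_def)
qed

lemma equilibrium_exponents:
  assumes G: "graph_on n E" and p: "0 < p" "p < 1"
    and T: "T \<in> equilibria n E (\<lambda>_. p)"
  obtains x where "x \<in> Xset n E" "\<forall>i<n. Funif (T i) = p powr x i"
proof
  define x where "x i = log p (Funif (T i))" for i
  have "0 < Funif (T i)" if "i < n" for i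
    using equilibrium_Funif_ge[OF T p that] p by linarith
  then show y: "\<forall>i<n. Funif (T i) = p powr x i"
    using p by (simp add: x_def)
  have "x i = max 0 (1 - (\<Sum>j\<in>nbrs n E i. x j))" if "i < n" for i
  proof -
    have "(\<Prod>j\<in>nbrs n E i. Funif (T j)) = p powr (\<Sum>j\<in>nbrs n E i. x j)"
      using y p by (simp add: powr_sum nbrs_def)
    then have "p powr x i = min 1 (p powr (1 - (\<Sum>j\<in>nbrs n E i. x j)))"
      using y equilibrium_Funif_eq[OF T p that] that p by (simp add: powr_diff)
    also have "\<dots> = p powr max 0 (1 - (\<Sum>j\<in>nbrs n E i. x j))"
      by (rule min_one_powr[OF p])
    finally show ?thesis
      using p by (metis log_powr_cancel less_irrefl)
  qed
  then show "x \<in> Xset n E"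
    by (simp add: Xset_iff_fixpoint[OF G])
qed

lemma exponents_equilibrium:
  assumes G: "graph_on n E" and p: "0 < p" "p < 1" and x: "x \<in> Xset n E"
  obtains T where "T \<in> equilibria n E (\<lambda>_. p)" "\<forall>i<n. Funif (T i) = p powr x i"
proof
  define T where "T i = ennreal (p powr (1 - (\<Sum>j\<in>nbrs n E i. x j)))" for i
  show y: "\<forall>i<n. Funif (T i) = p powr x i"
    using x p by (auto simp: T_def Funif_ennreal min_one_powr Xset_iff_fixpoint[OF G])
  have "(\<Prod>j\<in>nbrs n E i. Funif (T j)) = p powr (\<Sum>j\<in>nbrs n E i. x j)" for i
    using y p by (simp add: powr_sum nbrs_def)
  then show "T \<in> equilibria n E (\<lambda>_. p)"
    using p by (simp add: equilibria_def T_def powr_diff)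
qed

lemma revenue_bounds:
  assumes p: "0 < p" "p < 1" and x: "x \<in> Xset n E"
    and y: "\<forall>i<n. Funif (T i) = p powr x i"
  shows "p * (1 - p) * (\<Sum>i<n. x i) \<le> revenue n (\<lambda>_. p) T"
    and "revenue n (\<lambda>_. p) T \<le> p * ln (1 / p) * (\<Sum>i<n. x i)"
proof -
  have x01: "0 \<le> x i" "x i \<le> 1" if "i < n" for i
    using x that by (auto simp: Xset_def)
  have revenue: "revenue n (\<lambda>_. p) T = (\<Sum>i<n. p * (1 - p powr x i))"
    using y by (simp add: revenue_def)
  show "p * (1 - p) * (\<Sum>i<n. x i) \<le> revenue n (\<lambda>_. p) T"
    unfolding revenue sum_distrib_left mult.assoc
    using p x01 by (intro sum_mono mult_left_mono one_minus_powr_ge) auto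
  show "revenue n (\<lambda>_. p) T \<le> p * ln (1 / p) * (\<Sum>i<n. x i)"
    unfolding revenue sum_distrib_left
    using p by (intro sum_mono) (simp add: mult_left_mono one_minus_powr_le mult_ac)
qed

lemma maximal_independent_set_exists:
  assumes "graph_on n E"
  shows "\<exists>S \<subseteq> {..<m}. (\<forall>i\<in>S. \<forall>j\<in>S. \<not> E i j) \<and> (\<forall>i<m. i \<notin> S \<longrightarrow> (\<exists>j\<in>S. E i j))"
proof (induction m)
  case 0
  show ?case by auto
next
  case (Suc m)
  then obtain S where S: "S \<subseteq> {..<m}" "\<forall>i\<in>S. \<forall>j\<in>S. \<not> E i j"
    "\<forall>i<m. i \<notin> S \<longrightarrow> (\<exists>j\<in>S. E i j)"
    by blast
  show ?case
  proof (cases "\<exists>j\<in>S. E m j")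
    case True
    then show ?thesis using S by (intro exI[of _ S]) (auto simp: less_Suc_eq)
  next
    case False
    have "E a b \<Longrightarrow> E b a" "\<not> E a a" for a b
      using assms by (auto simp: graph_on_def)
    then show ?thesis using S False
      by (intro exI[of _ "insert m S"]) (auto simp: less_Suc_eq)
  qed
qed

lemma Xset_nonempty:
  assumes G: "graph_on n E"
  shows "Xset n E \<noteq> {}"
proof -
  obtain S where S: "S \<subseteq> {..<n}" "\<forall>i\<in>S. \<forall>j\<in>S. \<not> E i j"
    "\<forall>i<n. i \<notin> S \<longrightarrow> (\<exists>j\<in>S. E i j)"
    using maximal_independent_set_exists[OF G, of n] by blast
  define x :: "nat \<Rightarrow> real" where "x = indicator S"
  have "x i = max 0 (1 - (\<Sum>j\<in>nbrs n E i. x j))" if i: "i < n" for i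
  proof (cases "i \<in> S")
    case True
    then have "(\<Sum>j\<in>nbrs n E i. x j) = 0"
      using S(2) by (intro sum.neutral) (auto simp: x_def nbrs_def indicator_def)
    then show ?thesis using True by (simp add: x_def)
  next
    case False
    then obtain j where "j \<in> S" "E i j"
      using S(3) i by blast
    then have "j \<in> nbrs n E i"
      using S(1) by (auto simp: nbrs_def)
    with \<open>j \<in> S\<close> have "1 \<le> (\<Sum>j\<in>nbrs n E i. x j)"
      using member_le_sum[of j "nbrs n E i" x] by (simp add: x_def finite_nbrs)
    then show ?thesis using False by (simp add: x_def)
  qed
  then have "x \<in> Xset n E"
    by (simp add: Xset_iff_fixpoint[OF G])
  then show ?thesis by blast
qed

lemma scaled_INF_le_INF:
  fixes f :: "'a \<Rightarrow> real" and g :: "'b \<Rightarrow> real"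
  assumes "bdd_below (g ` B)" "\<And>a. a \<in> A \<Longrightarrow> \<exists>b\<in>B. c * g b \<le> f a" "0 \<le> c" "A \<noteq> {}"
  shows "c * (INF b\<in>B. g b) \<le> (INF a\<in>A. f a)"
proof (rule cINF_greatest[OF assms(4)])
  fix a assume "a \<in> A"
  then obtain b where "b \<in> B" "c * g b \<le> f a" using assms(2) by blast
  moreover have "c * (INF b\<in>B. g b) \<le> c * g b"
    using \<open>b \<in> B\<close> assms(1,3) by (intro mult_left_mono cINF_lower) auto
  ultimately show "c * (INF b\<in>B. g b) \<le> f a" by linarith
qed

lemma INF_le_scaled_INF:
  fixes f :: "'a \<Rightarrow> real" and g :: "'b \<Rightarrow> real"
  assumes "bdd_below (f ` A)" "\<And>b. b \<in> B \<Longrightarrow> \<exists>a\<in>A. f a \<le> c * g b" "0 < c" "B \<noteq> {}"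
  shows "(INF a\<in>A. f a) \<le> c * (INF b\<in>B. g b)"
proof -
  have "(INF a\<in>A. f a) / c \<le> (INF b\<in>B. g b)"
  proof (rule cINF_greatest[OF assms(4)])
    fix b assume "b \<in> B"
    then obtain a where "a \<in> A" "f a \<le> c * g b" using assms(2) by blast
    moreover have "(INF a\<in>A. f a) \<le> f a"
      using assms(1) \<open>a \<in> A\<close> by (rule cINF_lower)
    ultimately show "(INF a\<in>A. f a) / c \<le> g b"
      using assms(3) by (simp add: divide_le_eq mult.commute)
  qed
  then show ?thesis using assms(3) by (simp add: divide_le_eq mult.commute)
qed

theorem mainTheorem13:
  fixes n :: nat and E :: "nat \<Rightarrow> nat \<Rightarrow> bool" and p :: real
  assumes "graph_on n E" and "0 < p" and "p < 1"
  shows "p * (1 - p) * (INF x\<in>Xset n E. \<Sum>i<n. x i)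
           \<le> (INF T\<in>equilibria n E (\<lambda>_. p). revenue n (\<lambda>_. p) T)
       \<and> (INF T\<in>equilibria n E (\<lambda>_. p). revenue n (\<lambda>_. p) T)
           \<le> p * ln (1 / p) * (INF x\<in>Xset n E. \<Sum>i<n. x i)"
proof
  note G = assms(1) and p = assms(2,3)
  obtain x0 where "x0 \<in> Xset n E" using Xset_nonempty[OF G] by blast
  then obtain T0 where "T0 \<in> equilibria n E (\<lambda>_. p)"
    using exponents_equilibrium[OF G p] by blast
  have "bdd_below ((\<lambda>x. \<Sum>i<n. x i) ` Xset n E)"
    by (intro bdd_belowI2[of _ 0] sum_nonneg) (auto simp: Xset_def)
  then show "p * (1 - p) * (INF x\<in>Xset n E. \<Sum>i<n. x i)
      \<le> (INF T\<in>equilibria n E (\<lambda>_. p). revenue n (\<lambda>_. p) T)"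
  proof (rule scaled_INF_le_INF)
    fix T assume "T \<in> equilibria n E (\<lambda>_. p)"
    with equilibrium_exponents[OF G p] obtain x
      where "x \<in> Xset n E" "\<forall>i<n. Funif (T i) = p powr x i" by blast
    with revenue_bounds(1)[OF p]
    show "\<exists>x\<in>Xset n E. p * (1 - p) * (\<Sum>i<n. x i) \<le> revenue n (\<lambda>_. p) T"
      by blast
  qed (use p \<open>T0 \<in> _\<close> in auto)
  have "bdd_below (revenue n (\<lambda>_. p) ` equilibria n E (\<lambda>_. p))"
    using p by (intro bdd_belowI2[of _ 0]) (auto simp: revenue_def Funif_le_one intro!: sum_nonneg)
  then show "(INF T\<in>equilibria n E (\<lambda>_. p). revenue n (\<lambda>_. p) T)
      \<le> p * ln (1 / p) * (INF x\<in>Xset n E. \<Sum>i<n. x i)"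
  proof (rule INF_le_scaled_INF)
    fix x assume "x \<in> Xset n E"
    with exponents_equilibrium[OF G p] obtain T
      where "T \<in> equilibria n E (\<lambda>_. p)" "\<forall>i<n. Funif (T i) = p powr x i" by blast
    with revenue_bounds(2)[OF p \<open>x \<in> _\<close>]
    show "\<exists>T\<in>equilibria n E (\<lambda>_. p). revenue n (\<lambda>_. p) T \<le> p * ln (1 / p) * (\<Sum>i<n. x i)"
      by blast
  qed (use p \<open>x0 \<in> _\<close> in \<open>auto simp: ln_div mult_pos_neg\<close>)
qed

end
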